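(* Let $m\ge 2$, let $\delta_1,\ldots,\delta_m\in\mathbb{R}\setminus\{0\}$ be pairwise distinct, and let $g\in L^1(\mathbb{R})$ be the function with Fourier transform $\hat g(\xi)=\prod_{k=1}^m(1+2\pi j\delta_k\xi)^{-1}$. Let $\alpha>0$. Then for all $x\in[0,\alpha)$ and $\xi\in[0,1/\alpha)$, $$Z_\alpha g(x,\xi)=\sum_{i=1}^m \frac{1}{\delta_i}\,\frac{e^{-x/\delta_i}}{1-e^{-\alpha(1/\delta_i+2\pi j\xi)}}\cdot\prod_{k=1,k\neq i}^m\left(1-\frac{\delta_k}{\delta_i}\right)^{-1}.$$
   Context: $j$ is the imaginary unit and $\hat g(\xi)=\int g(x)e^{-2\pi jx\xi}dx$. For $f\in L^2(\mathbb{R})$ and $\alpha>0$ the Zak transform is $Z_\alpha f(x,\xi)=\sum_{k\in\mathbb{Z}} f(x-\alpha k)e^{2\pi j\alpha k\xi}$, $x,\xi\in\mathbb{R}$. Such a $g$ (totally positive of finite type $m\ge2$) is continuous with exponential decay, so $Z_\alpha g$ is continuous. *)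

theory Defs
  imports "HOL-Analysis.Analysis"
begin

definition fourier_transform :: "(real \<Rightarrow> complex) \<Rightarrow> real \<Rightarrow> complex" where
  "fourier_transform g \<xi> =
     (LINT x|lborel. g x * exp (- (2 * complex_of_real pi * \<i> * complex_of_real x * complex_of_real \<xi>)))"

definition zak_transform :: "real \<Rightarrow> (real \<Rightarrow> complex) \<Rightarrow> real \<Rightarrow> real \<Rightarrow> complex" where
  "zak_transform \<alpha> f x \<xi> =
     infsum (\<lambda>k::int. f (x - \<alpha> * real_of_int k) *
        exp (2 * complex_of_real pi * \<i> * complex_of_real (\<alpha> * real_of_int k * \<xi>))) UNIV"

end

theory Submission
  imports Defs "HOL-Probability.Probability"
begin

text \<open>The factor \<open>1/(1 + 2\<pi>j\<delta>\<xi>)\<close> is the Fourier transform of the one-sided exponential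
  \<open>exp(-y/\<delta>)/|\<delta>|\<close>, supported on the half-line where it decays. For distinct \<open>\<delta>\<^sub>k\<close> the
  product of these factors splits into partial fractions, so by uniqueness of the Fourier transform
  (via Levy's theorem) \<open>g\<close> agrees almost everywhere, hence by continuity everywhere, with the
  corresponding combination of one-sided exponentials. Sampled at \<open>x - \<alpha>k\<close>, each exponential
  gives a geometric series in \<open>exp(-\<alpha>(1/\<delta> + 2\<pi>j\<xi>))\<close> over \<open>k \<le> 0\<close> or over \<open>k \<ge> 1\<close>,
  whose sum is the stated formula.\<close>

section \<open>Uniqueness of the Fourier transform\<close>

lemma integrable_mult_iexp:
  fixes f :: "real \<Rightarrow> complex"
  assumes "integrable lborel f"
  shows "integrable lborel (\<lambda>x. f x * iexp (t * x))"
proof (rule Bochner_Integration.integrable_bound[OF assms])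
  have [measurable]: "f \<in> borel_measurable lborel" using assms by auto
  show "(\<lambda>x. f x * iexp (t * x)) \<in> borel_measurable lborel" by measurable
qed (auto simp: norm_mult)

lemma fourier_transform_iexp:
  "fourier_transform f \<xi> = (CLINT x|lborel. f x * iexp (- (2 * pi * \<xi>) * x))"
  unfolding fourier_transform_def
  by (rule Bochner_Integration.integral_cong) (auto simp: algebra_simps)

lemma fourier_transform_diff:
  assumes "integrable lborel f" "integrable lborel h"
  shows "fourier_transform (\<lambda>x. f x - h x) \<xi> = fourier_transform f \<xi> - fourier_transform h \<xi>"
  unfolding fourier_transform_iexp left_diff_distrib
  by (intro Bochner_Integration.integral_diff integrable_mult_iexp assms)

lemma real_distribution_density_lborel:
  assumes "integrable lborel p" "\<And>x. p x \<ge> 0" "(LINT x|lborel. p x) = 1"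
  shows "real_distribution (density lborel p)"
proof -
  have [measurable]: "p \<in> borel_measurable lborel" using assms(1) by auto
  have "emeasure (density lborel p) (space (density lborel p)) = (\<integral>\<^sup>+x. ennreal (p x) \<partial>lborel)"
    by (simp add: emeasure_density)
  also have "\<dots> = 1"
    using assms by (subst nn_integral_eq_integral) auto
  finally have "prob_space (density lborel p)"
    by (rule prob_spaceI)
  then show ?thesis
    by (simp add: real_distribution_def real_distribution_axioms_def)
qed

lemma char_density_lborel:
  assumes "p \<in> borel_measurable lborel" "\<And>x. p x \<ge> 0"
  shows "char (density lborel p) t = (CLINT x|lborel. p x *\<^sub>R iexp (t * x))"
  unfolding char_def using assms by (subst integral_density) auto

lemma nonneg_fourier_unique:
  fixes p q :: "real \<Rightarrow> real"
  assumes p: "integrable lborel p" "\<And>x. p x \<ge> 0"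
    and q: "integrable lborel q" "\<And>x. q x \<ge> 0"
    and eq: "\<And>t. (CLINT x|lborel. p x *\<^sub>R iexp (t * x)) = (CLINT x|lborel. q x *\<^sub>R iexp (t * x))"
  shows "AE x in lborel. p x = q x"
proof -
  define c where "c = (LINT x|lborel. p x)"
  have "complex_of_real c = complex_of_real (LINT x|lborel. q x)"
    using eq[of 0] unfolding c_def by (simp flip: of_real_def)
  then have c_q: "c = (LINT x|lborel. q x)" by simp
  show ?thesis
  proof (cases "c = 0")
    case True
    then have "(LINT x|lborel. p x) = 0" "(LINT x|lborel. q x) = 0"
      using c_q by (simp_all add: c_def)
    then have "AE x in lborel. p x = 0" "AE x in lborel. q x = 0"
      using p q by (simp_all add: integral_nonneg_eq_0_iff_AE)
    then show ?thesis by eventually_elim simp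
  next
    case False
    then have c: "c > 0"
      using p unfolding c_def by (simp add: integral_nonneg_AE order_le_neq_trans)
    have [measurable]: "p \<in> borel_measurable borel" "q \<in> borel_measurable borel"
      using p q by auto
    have "char (density lborel (\<lambda>x. p x / c)) = char (density lborel (\<lambda>x. q x / c))"
    proof
      fix t
      have "(CLINT x|lborel. (u x / c) *\<^sub>R iexp (t * x)) = inverse c *\<^sub>R (CLINT x|lborel. u x *\<^sub>R iexp (t * x))"
        for u :: "real \<Rightarrow> real"
        by (subst integral_scaleR_right[symmetric]) (simp add: divide_inverse mult.commute)
      then have "(CLINT x|lborel. (p x / c) *\<^sub>R iexp (t * x)) = (CLINT x|lborel. (q x / c) *\<^sub>R iexp (t * x))"
        using eq[of t] by simp
      then show "char (density lborel (\<lambda>x. p x / c)) t = char (density lborel (\<lambda>x. q x / c)) t"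
        using p q c by (simp add: char_density_lborel)
    qed
    moreover have "real_distribution (density lborel (\<lambda>x. p x / c))"
      "real_distribution (density lborel (\<lambda>x. q x / c))"
      using p q c c_q by (auto intro!: real_distribution_density_lborel simp: c_def)
    ultimately have "density lborel (\<lambda>x. ennreal (p x / c)) = density lborel (\<lambda>x. ennreal (q x / c))"
      using Levy_uniqueness by blast
    then have "AE x in lborel. ennreal (p x / c) = ennreal (q x / c)"
      by (intro sigma_finite_measure.density_unique[OF sigma_finite_lborel]) auto
    then show ?thesis
      by eventually_elim (use p q c in \<open>simp add: ennreal_inj\<close>)
  qed
qed

lemma real_fourier_unique:
  fixes u :: "real \<Rightarrow> real"
  assumes u: "integrable lborel u"
    and zero: "\<And>t. (CLINT x|lborel. u x *\<^sub>R iexp (t * x)) = 0"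
  shows "AE x in lborel. u x = 0"
proof -
  define p q where "p x = max (u x) 0" and "q x = max (- u x) 0" for x
  have pq: "integrable lborel p" "integrable lborel q"
    using u unfolding p_def q_def by auto
  have u_pq: "u x = p x - q x" for x
    unfolding p_def q_def by auto
  have "AE x in lborel. p x = q x"
  proof (rule nonneg_fourier_unique[OF pq(1) _ pq(2)])
    fix t
    have "integrable lborel (\<lambda>x. v x *\<^sub>R iexp (t * x))" if "integrable lborel v" for v
      using integrable_mult_iexp[of "\<lambda>x. complex_of_real (v x)" t] that
      by (simp add: scaleR_conv_of_real)
    then show "(CLINT x|lborel. p x *\<^sub>R iexp (t * x)) = (CLINT x|lborel. q x *\<^sub>R iexp (t * x))"
      using zero[of t] pq unfolding u_pq scaleR_diff_left
      by (subst (asm) Bochner_Integration.integral_diff) auto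
  qed (auto simp: p_def q_def)
  then show ?thesis
    by eventually_elim (simp add: u_pq)
qed

lemma fourier_transform_unique:
  fixes f h :: "real \<Rightarrow> complex"
  assumes f: "integrable lborel f" and h: "integrable lborel h"
    and eq: "\<And>\<xi>. fourier_transform f \<xi> = fourier_transform h \<xi>"
  shows "AE x in lborel. f x = h x"
proof -
  define v where "v x = f x - h x" for x
  have v: "integrable lborel v"
    using f h unfolding v_def by auto
  have zero: "(CLINT x|lborel. v x * iexp (t * x)) = 0" for t
    using eq[of "- t / (2 * pi)"] fourier_transform_diff[OF f h, of "- t / (2 * pi)"]
    unfolding v_def fourier_transform_iexp by simp
  have zero_cnj: "(CLINT x|lborel. cnj (v x) * iexp (t * x)) = 0" for t
  proof -
    have "(CLINT x|lborel. cnj (v x) * iexp (t * x)) = cnj (CLINT x|lborel. v x * iexp (- t * x))"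
      unfolding Bochner_Integration.integral_cnj[symmetric]
      by (rule Bochner_Integration.integral_cong) (simp_all add: exp_cnj)
    then show ?thesis using zero[of "- t"] by simp
  qed
  have "integrable lborel (\<lambda>x. cnj (v x))"
    using v by simp
  note v_iexp = integrable_mult_iexp[OF v] and v_cnj_iexp = integrable_mult_iexp[OF this]
  have "AE x in lborel. Re (v x) = 0"
  proof (rule real_fourier_unique)
    fix t
    have "(CLINT x|lborel. Re (v x) *\<^sub>R iexp (t * x)) =
        (CLINT x|lborel. (1/2) * (v x * iexp (t * x)) + (1/2) * (cnj (v x) * iexp (t * x)))"
      by (rule Bochner_Integration.integral_cong) (auto simp: complex_eq_iff field_simps)
    then show "(CLINT x|lborel. Re (v x) *\<^sub>R iexp (t * x)) = 0"
      using v_iexp v_cnj_iexp zero zero_cnj by simp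
  qed (use v in simp)
  moreover have "AE x in lborel. Im (v x) = 0"
  proof (rule real_fourier_unique)
    fix t
    have "(CLINT x|lborel. Im (v x) *\<^sub>R iexp (t * x)) =
        (CLINT x|lborel. (-\<i>/2) * (v x * iexp (t * x)) + (\<i>/2) * (cnj (v x) * iexp (t * x)))"
      by (rule Bochner_Integration.integral_cong) (auto simp: complex_eq_iff field_simps)
    then show "(CLINT x|lborel. Im (v x) *\<^sub>R iexp (t * x)) = 0"
      using v_iexp v_cnj_iexp zero zero_cnj by simp
  qed (use v in simp)
  ultimately show ?thesis
    by eventually_elim (simp add: v_def complex_eq_iff)
qed

section \<open>Partial fractions\<close>

lemma partial_fractions_two:
  fixes a b c :: "'a::field"
  assumes "b \<noteq> 0" "c \<noteq> 0" "b \<noteq> c" "1 + a * b \<noteq> 0" "1 + a * c \<noteq> 0"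
  shows "inverse (1 - c / b) * inverse (1 + a * b) + inverse (1 - b / c) * inverse (1 + a * c)
     = inverse (1 + a * b) * inverse (1 + a * c)"
proof -
  have bc: "b - c \<noteq> 0" using assms by simp
  have "inverse (1 - c / b) = b / (b - c)" "inverse (1 - b / c) = - c / (b - c)"
    using assms bc by (simp_all add: field_simps)
  then have "inverse (1 - c / b) * inverse (1 + a * b) + inverse (1 - b / c) * inverse (1 + a * c)
      = (b * (1 + a * c) - c * (1 + a * b)) / ((b - c) * (1 + a * b) * (1 + a * c))"
    using assms bc by (simp add: divide_simps) (simp add: algebra_simps)
  also have "b * (1 + a * c) - c * (1 + a * b) = b - c"
    by (simp add: algebra_simps)
  also have "(b - c) / ((b - c) * (1 + a * b) * (1 + a * c)) = inverse (1 + a * b) * inverse (1 + a * c)"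
    using bc by (simp add: divide_inverse inverse_mult_distrib)
  finally show ?thesis .
qed

lemma prod_inverse_partial_fractions:
  fixes d :: "'b \<Rightarrow> 'a::field"
  assumes "finite S" "S \<noteq> {}" "inj_on d S" "\<And>k. k \<in> S \<Longrightarrow> d k \<noteq> 0"
    and "\<And>k. k \<in> S \<Longrightarrow> 1 + a * d k \<noteq> 0"
  shows "(\<Prod>k\<in>S. inverse (1 + a * d k)) =
    (\<Sum>i\<in>S. (\<Prod>k\<in>S - {i}. inverse (1 - d k / d i)) * inverse (1 + a * d i))"
  using assms
proof (induction S arbitrary: a rule: finite_ne_induct)
  case (singleton x)
  then show ?case by simp
next
  case (insert j S)
  define C where "C i = (\<Prod>k\<in>S - {i}. inverse (1 - d k / d i))" for i
  have dj: "d j \<noteq> 0" and dk: "\<And>k. k \<in> S \<Longrightarrow> d k \<noteq> 0" and ne: "\<And>k. k \<in> S \<Longrightarrow> d k \<noteq> d j"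
    using insert by (auto simp: inj_on_def)
  have IH: "(\<Prod>k\<in>S. inverse (1 + b * d k)) = (\<Sum>i\<in>S. C i * inverse (1 + b * d i))"
    if "\<And>k. k \<in> S \<Longrightarrow> 1 + b * d k \<noteq> 0" for b
    using insert.IH[of b] insert.prems that unfolding C_def by (auto simp: inj_on_def)
  \<comment> \<open>the coefficients at the new pole \<open>d j\<close> are the induction hypothesis at \<open>a = -1/d j\<close>\<close>
  have at_dj: "1 + (- 1 / d j) * d k = 1 - d k / d j" for k
    by simp
  have "1 - d k / d j \<noteq> 0" if "k \<in> S" for k
    using ne[OF that] dj by (simp add: field_simps)
  then have residue_j: "(\<Prod>k\<in>S. inverse (1 - d k / d j)) = (\<Sum>i\<in>S. C i * inverse (1 - d i / d j))"
    using IH[of "- 1 / d j"] unfolding at_dj by blast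
  have split: "(\<Prod>k\<in>insert j S - {i}. inverse (1 - d k / d i)) = C i * inverse (1 - d j / d i)"
    if "i \<in> S" for i
  proof -
    have "insert j S - {i} = insert j (S - {i})" using that insert.hyps by auto
    then show ?thesis unfolding C_def using insert.hyps by (simp add: mult.commute)
  qed
  have "(\<Prod>k\<in>insert j S. inverse (1 + a * d k)) = (\<Prod>k\<in>S. inverse (1 + a * d k)) * inverse (1 + a * d j)"
    using insert.hyps by (simp add: mult.commute)
  also have "\<dots> = (\<Sum>i\<in>S. C i * (inverse (1 + a * d i) * inverse (1 + a * d j)))"
    using IH insert.prems by (simp add: sum_distrib_right mult.assoc)
  also have "\<dots> = (\<Sum>i\<in>S. C i * inverse (1 - d j / d i) * inverse (1 + a * d i)
      + C i * inverse (1 - d i / d j) * inverse (1 + a * d j))"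
    using insert.prems dk dj ne
    by (intro sum.cong refl) (simp add: partial_fractions_two[symmetric] distrib_left mult.assoc)
  also have "\<dots> = (\<Sum>i\<in>S. (\<Prod>k\<in>insert j S - {i}. inverse (1 - d k / d i)) * inverse (1 + a * d i))
      + (\<Prod>k\<in>S. inverse (1 - d k / d j)) * inverse (1 + a * d j)"
    by (simp add: sum.distrib split residue_j sum_distrib_right)
  also have "\<dots> = (\<Sum>i\<in>insert j S. (\<Prod>k\<in>insert j S - {i}. inverse (1 - d k / d i)) * inverse (1 + a * d i))"
    using insert.hyps by (simp add: add.commute)
  finally show ?case .
qed

lemma partial_fractions_fourier_factors:
  fixes \<delta> :: "'b \<Rightarrow> real"
  assumes "finite S" "S \<noteq> {}" "inj_on \<delta> S" "\<And>k. k \<in> S \<Longrightarrow> \<delta> k \<noteq> 0"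
  shows "(\<Prod>k\<in>S. inverse (1 + 2 * complex_of_real pi * \<i> * complex_of_real (\<delta> k * \<xi>))) =
    (\<Sum>i\<in>S. (\<Prod>k\<in>S - {i}. inverse (1 - complex_of_real (\<delta> k / \<delta> i))) *
      inverse (1 + 2 * complex_of_real pi * \<i> * complex_of_real (\<delta> i * \<xi>)))"
proof -
  define a where "a = 2 * complex_of_real pi * \<i> * complex_of_real \<xi>"
  have factor: "1 + 2 * complex_of_real pi * \<i> * complex_of_real (\<delta> k * \<xi>) = 1 + a * complex_of_real (\<delta> k)" for k
    by (simp add: a_def ac_simps)
  have "Re (1 + a * complex_of_real (\<delta> k)) = 1" for k
    by (simp add: a_def)
  then have "1 + a * complex_of_real (\<delta> k) \<noteq> 0" for k
    by (metis one_neq_zero zero_complex.sel(1))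
  moreover have "inj_on (\<lambda>k. complex_of_real (\<delta> k)) S"
    using assms(3) by (simp add: inj_on_def)
  ultimately show ?thesis
    unfolding factor of_real_divide
    using prod_inverse_partial_fractions[of S "\<lambda>k. complex_of_real (\<delta> k)" a] assms by simp
qed

section \<open>One-sided exponential kernels\<close>

lemma set_integrable_exp_nonneg_halfline:
  fixes w :: complex
  assumes "0 < Re w"
  shows "set_integrable lborel {0..} (\<lambda>x. exp (- (w * of_real x)))"
proof -
  have "(\<lambda>x. exp (- Re w * x)) absolutely_integrable_on {0..}"
    using assms by (intro nonnegative_absolutely_integrable_1 integrable_on_exp_minus_to_infinity) auto
  then have "set_integrable lborel {0..} (\<lambda>x. exp (- Re w * x))"
    unfolding set_integrable_def
    by (subst (asm) integrable_completion) (auto intro!: borel_measurable_continuous_on_indicator continuous_intros)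
  then show ?thesis
  proof (rule set_integrable_bound)
    show "set_borel_measurable lborel {0..} (\<lambda>x. exp (- (w * of_real x)))"
      unfolding set_borel_measurable_def by measurable
    show "AE x in lborel. x \<in> {0..} \<longrightarrow> norm (exp (- (w * of_real x))) \<le> norm (exp (- Re w * x))"
      by simp
  qed
qed

lemma set_integral_exp_Icc:
  fixes w :: complex
  assumes "w \<noteq> 0" "0 \<le> b"
  shows "(LINT x:{0..b}|lborel. exp (- (w * of_real x))) = (1 - exp (- (w * of_real b))) / w"
proof -
  have "(LINT x:{0..b}|lborel. exp (- (w * of_real x))) = integral {0..b} (\<lambda>x. exp (- (w * of_real x)))"
    by (intro set_borel_integral_eq_integral(2) borel_integrable_atLeastAtMost' continuous_intros)
  also have "\<dots> = - exp (- (w * of_real b)) / w - - exp (- (w * of_real 0)) / w"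
  proof (intro integral_unique fundamental_theorem_of_calculus[OF assms(2)])
    fix x :: real
    have "((\<lambda>z. - exp (- (w * z)) / w) has_field_derivative exp (- (w * of_real x))) (at (of_real x))"
      using assms(1) by (auto intro!: derivative_eq_intros)
    then show "((\<lambda>x. - exp (- (w * of_real x)) / w) has_vector_derivative exp (- (w * of_real x)))
        (at x within {0..b})"
      using has_vector_derivative_real_field has_vector_derivative_at_within by blast
  qed
  finally show ?thesis
    by (simp add: diff_divide_distrib)
qed

lemma set_integral_exp_nonneg_halfline:
  fixes w :: complex
  assumes "0 < Re w"
  shows "(LINT x:{0..}|lborel. exp (- (w * of_real x))) = 1 / w"
proof -
  define E where "E x = exp (- (w * of_real x))" for x
  have w: "w \<noteq> 0" using assms by auto
  have "((\<lambda>b. LINT x:{0..b}|lborel. E x) \<longlongrightarrow> (LINT x:{0..}|lborel. E x)) at_top"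
    using set_integrable_exp_nonneg_halfline[OF assms] unfolding E_def[symmetric]
    by (rule tendsto_set_lebesgue_integral_at_top[rotated]) simp
  moreover have "((\<lambda>b. LINT x:{0..b}|lborel. E x) \<longlongrightarrow> 1 / w) at_top"
  proof -
    have "((\<lambda>b. norm (E b)) \<longlongrightarrow> 0) at_top"
      using assms unfolding E_def by simp real_asymp
    then have "(E \<longlongrightarrow> 0) at_top"
      by (simp only: tendsto_norm_zero_iff)
    then have "((\<lambda>b. (1 - E b) / w) \<longlongrightarrow> (1 - 0) / w) at_top"
      using w by (intro tendsto_divide tendsto_diff tendsto_const)
    moreover have "\<forall>\<^sub>F b in at_top. (1 - E b) / w = (LINT x:{0..b}|lborel. E x)"
      using eventually_ge_at_top[of 0] by eventually_elim (simp add: E_def set_integral_exp_Icc[OF w])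
    ultimately show ?thesis
      by (simp add: Lim_transform_eventually)
  qed
  ultimately show ?thesis
    unfolding E_def by (rule tendsto_unique[OF trivial_limit_at_top_linorder])
qed

lemma set_integral_exp_neg_halfline:
  fixes w :: complex
  assumes "Re w < 0"
  shows "set_integrable lborel {..<0} (\<lambda>x. exp (- (w * of_real x)))"
    and "(LINT x:{..<0}|lborel. exp (- (w * of_real x))) = - 1 / w"
proof -
  define f P where "f x = indicator {..<0} x *\<^sub>R exp (- (w * of_real x))"
    and "P x = indicator {0..} x *\<^sub>R exp (- (- w * of_real x))" for x :: real
  have [measurable]: "f \<in> borel_measurable borel" "P \<in> borel_measurable borel"
    unfolding f_def P_def by measurable
  have reflect: "AE x in lborel. f (0 + (-1) * x) = P x"
    using AE_lborel_singleton[of 0] by eventually_elim (auto simp: f_def P_def indicator_def)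
  have P: "integrable lborel P" "(LINT x|lborel. P x) = 1 / - w"
    using set_integrable_exp_nonneg_halfline[of "- w"] set_integral_exp_nonneg_halfline[of "- w"] assms
    unfolding P_def set_integrable_def set_lebesgue_integral_def by auto
  have "integrable lborel (\<lambda>x. f (0 + (-1) * x))"
    using integrable_cong_AE[OF _ _ reflect] P(1) by simp
  then show "set_integrable lborel {..<0} (\<lambda>x. exp (- (w * of_real x)))"
    unfolding set_integrable_def f_def[symmetric] using lborel_integrable_real_affine_iff[of "-1" f 0] by simp
  have "(LINT x|lborel. f x) = \<bar>-1\<bar> *\<^sub>R (LINT x|lborel. f (0 + (-1) * x))"
    by (rule lborel_integral_real_affine) simp
  also have "\<dots> = (LINT x|lborel. P x)"
    using integral_cong_AE[OF _ _ reflect] by simp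
  finally show "(LINT x:{..<0}|lborel. exp (- (w * of_real x))) = - 1 / w"
    unfolding set_lebesgue_integral_def f_def[symmetric] using P(2) by simp
qed

text \<open>At \<open>y = 0\<close> the kernel is taken right-continuous: a continuous \<open>g\<close> equal to a sum of
  kernels almost everywhere then equals it at \<open>0\<close> as well.\<close>
definition exp_kernel :: "real \<Rightarrow> real \<Rightarrow> complex" where
  "exp_kernel d y = (if 0 < d \<longleftrightarrow> 0 \<le> y then complex_of_real (exp (- y / d) / \<bar>d\<bar>) else 0)"

lemma exp_kernel_fourier_transform:
  assumes d: "d \<noteq> 0"
  shows "integrable lborel (\<lambda>x. exp_kernel d x * iexp (- (2 * pi * \<xi>) * x))"
    and "fourier_transform (exp_kernel d) \<xi> = inverse (1 + 2 * complex_of_real pi * \<i> * complex_of_real (d * \<xi>))"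
proof -
  define w where "w = complex_of_real (1 / d) + 2 * complex_of_real pi * \<i> * complex_of_real \<xi>"
  define S where "S = (if 0 < d then {0..} else {..<(0::real)})"
  have kernel: "exp_kernel d x * iexp (- (2 * pi * \<xi>) * x) =
      complex_of_real (1 / \<bar>d\<bar>) * (indicator S x *\<^sub>R exp (- (w * of_real x)))" for x
  proof -
    have "exp (complex_of_real (- x / d)) * iexp (- (2 * pi * \<xi>) * x) = exp (- (w * of_real x))"
      unfolding w_def by (simp add: exp_add[symmetric] algebra_simps)
    then show ?thesis
      using d by (auto simp: exp_kernel_def S_def indicator_def exp_of_real[symmetric] divide_inverse)
  qed
  have "0 < d \<Longrightarrow> 0 < Re w" "d < 0 \<Longrightarrow> Re w < 0"
    unfolding w_def by simp_all
  then have halfline: "set_integrable lborel S (\<lambda>x. exp (- (w * of_real x)))"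
      "(LINT x:S|lborel. exp (- (w * of_real x))) = of_real (sgn d) / w"
    using d set_integrable_exp_nonneg_halfline set_integral_exp_nonneg_halfline
      set_integral_exp_neg_halfline[of w] by (auto simp: S_def sgn_if)
  show "integrable lborel (\<lambda>x. exp_kernel d x * iexp (- (2 * pi * \<xi>) * x))"
    using halfline(1) unfolding kernel set_integrable_def by (rule Bochner_Integration.integrable_mult_right)
  have "fourier_transform (exp_kernel d) \<xi> = complex_of_real (1 / \<bar>d\<bar>) * (of_real (sgn d) / w)"
    using halfline(2) unfolding fourier_transform_iexp kernel set_lebesgue_integral_def
    by (subst Bochner_Integration.integral_mult_right_zero) simp
  also have "\<dots> = inverse (complex_of_real d * w)"
    using d by (simp add: sgn_if field_simps)
  also have "complex_of_real d * w = 1 + 2 * complex_of_real pi * \<i> * complex_of_real (d * \<xi>)"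
    using d by (simp add: w_def field_simps)
  finally show "fourier_transform (exp_kernel d) \<xi> = inverse (1 + 2 * complex_of_real pi * \<i> * complex_of_real (d * \<xi>))" .
qed

lemma exp_kernel_sum_fourier_transform:
  assumes "finite I" "\<And>i. i \<in> I \<Longrightarrow> d i \<noteq> 0"
  shows "integrable lborel (\<lambda>y. \<Sum>i\<in>I. c i * exp_kernel (d i) y)"
    and "fourier_transform (\<lambda>y. \<Sum>i\<in>I. c i * exp_kernel (d i) y) \<xi> =
      (\<Sum>i\<in>I. c i * inverse (1 + 2 * complex_of_real pi * \<i> * complex_of_real (d i * \<xi>)))"
proof -
  have integrable: "integrable lborel (\<lambda>x. exp_kernel (d i) x * iexp (- (2 * pi * \<xi>') * x))"
    if "i \<in> I" for i \<xi>'
    using exp_kernel_fourier_transform(1)[OF assms(2)[OF that]] .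
  have "integrable lborel (exp_kernel (d i))" if "i \<in> I" for i
    using integrable[OF that, of 0] by simp
  then show "integrable lborel (\<lambda>y. \<Sum>i\<in>I. c i * exp_kernel (d i) y)"
    by (intro Bochner_Integration.integrable_sum Bochner_Integration.integrable_mult_right)
  have "fourier_transform (\<lambda>y. \<Sum>i\<in>I. c i * exp_kernel (d i) y) \<xi> =
      (CLINT x|lborel. (\<Sum>i\<in>I. c i * (exp_kernel (d i) x * iexp (- (2 * pi * \<xi>) * x))))"
    unfolding fourier_transform_iexp by (simp add: sum_distrib_right mult.assoc)
  also have "\<dots> = (\<Sum>i\<in>I. c i * fourier_transform (exp_kernel (d i)) \<xi>)"
    unfolding fourier_transform_iexp using integrable by (subst Bochner_Integration.integral_sum) auto
  finally show "fourier_transform (\<lambda>y. \<Sum>i\<in>I. c i * exp_kernel (d i) y) \<xi> =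
      (\<Sum>i\<in>I. c i * inverse (1 + 2 * complex_of_real pi * \<i> * complex_of_real (d i * \<xi>)))"
    using exp_kernel_fourier_transform(2) assms(2) by simp
qed

lemma continuous_AE_const_on_closure:
  fixes F :: "real \<Rightarrow> 'a::t2_space"
  assumes F: "continuous_on UNIV F" and U: "open U"
    and ae: "AE y in lborel. y \<in> U \<longrightarrow> F y = c"
    and x: "x \<in> closure U"
  shows "F x = c"
proof -
  have "F y = c" if y: "y \<in> U" for y
  proof (rule ccontr)
    assume "F y \<noteq> c"
    then have "y \<in> U \<inter> F -` (- {c})" using y by simp
    moreover have "open (U \<inter> F -` (- {c}))"
      using U F by (intro open_Int open_vimage) auto
    ultimately obtain e where e: "e > 0" "ball y e \<subseteq> U \<inter> F -` (- {c})"
      by (meson openE)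
    have "AE z in lborel. z \<notin> ball y e"
      using ae by eventually_elim (use e in auto)
    then have "emeasure lborel (ball y e) = 0"
      by (subst AE_iff_measurable[symmetric, where P="\<lambda>z. z \<notin> ball y e"]) auto
    then show False
      using e by (simp add: ball_eq_greaterThanLessThan)
  qed
  then show ?thesis
    using continuous_constant_on_closure[OF continuous_on_subset[OF F] _ x] by blast
qed

lemma continuous_AE_eq_exp_kernel_sum:
  fixes g :: "real \<Rightarrow> complex"
  assumes "continuous_on UNIV g" "\<And>i. i \<in> I \<Longrightarrow> d i \<noteq> 0"
    and ae: "AE y in lborel. g y = (\<Sum>i\<in>I. c i * exp_kernel (d i) y)"
  shows "g y = (\<Sum>i\<in>I. c i * exp_kernel (d i) y)"
proof -
  \<comment> \<open>\<open>branch s\<close> is continuous on all of \<open>\<real>\<close>; the kernel sum follows \<open>branch True\<close> on \<open>[0,\<infinity>)\<close>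
    and \<open>branch False\<close> on \<open>(-\<infinity>,0)\<close>\<close>
  define branch where "branch s y =
    (\<Sum>i\<in>I. c i * (if 0 < d i \<longleftrightarrow> s then complex_of_real (exp (- y / d i) / \<bar>d i\<bar>) else 0))" for s y
  have branch: "(\<Sum>i\<in>I. c i * exp_kernel (d i) y) = branch (0 \<le> y) y" for y
    by (simp add: branch_def exp_kernel_def)
  have "continuous_on UNIV (\<lambda>y. if 0 < d i \<longleftrightarrow> s then complex_of_real (exp (- y / d i) / \<bar>d i\<bar>) else 0)"
    if "i \<in> I" for i s
    using assms(2)[OF that] by (cases "0 < d i \<longleftrightarrow> s") (auto intro!: continuous_intros)
  then have cont: "continuous_on UNIV (\<lambda>y. g y - branch s y)" for s
    unfolding branch_def using assms(1) by (intro continuous_intros) auto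
  have ae_pos: "AE y in lborel. y \<in> {0<..} \<longrightarrow> g y - branch True y = 0"
    and ae_neg: "AE y in lborel. y \<in> {..<0} \<longrightarrow> g y - branch False y = 0"
    using ae by (eventually_elim, simp add: branch)+
  have "g y - branch (0 \<le> y) y = 0"
  proof (cases "0 \<le> y")
    case True
    then show ?thesis
      using continuous_AE_const_on_closure[OF cont open_greaterThan ae_pos] by simp
  next
    case False
    then show ?thesis
      using continuous_AE_const_on_closure[OF cont open_lessThan ae_neg] by simp
  qed
  then show ?thesis
    by (simp add: branch)
qed

lemma fourier_product_inversion:
  fixes g :: "real \<Rightarrow> complex" and \<delta> :: "'b \<Rightarrow> real"
  assumes "finite S" "S \<noteq> {}" "inj_on \<delta> S" "\<And>k. k \<in> S \<Longrightarrow> \<delta> k \<noteq> 0"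
    and "integrable lborel g" "continuous_on UNIV g"
    and "\<And>\<xi>. fourier_transform g \<xi> =
      (\<Prod>k\<in>S. inverse (1 + 2 * complex_of_real pi * \<i> * complex_of_real (\<delta> k * \<xi>)))"
  shows "g y = (\<Sum>i\<in>S. (\<Prod>k\<in>S - {i}. inverse (1 - complex_of_real (\<delta> k / \<delta> i))) * exp_kernel (\<delta> i) y)"
proof -
  define h where "h y = (\<Sum>i\<in>S. (\<Prod>k\<in>S - {i}. inverse (1 - complex_of_real (\<delta> k / \<delta> i))) *
    exp_kernel (\<delta> i) y)" for y
  have "fourier_transform h \<xi> = (\<Sum>i\<in>S. (\<Prod>k\<in>S - {i}. inverse (1 - complex_of_real (\<delta> k / \<delta> i))) *
      inverse (1 + 2 * complex_of_real pi * \<i> * complex_of_real (\<delta> i * \<xi>)))" for \<xi>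
    unfolding h_def using assms(1,4) by (rule exp_kernel_sum_fourier_transform(2))
  then have "fourier_transform g \<xi> = fourier_transform h \<xi>" for \<xi>
    by (simp only: assms(7) partial_fractions_fourier_factors[OF assms(1-4)])
  moreover have "integrable lborel h"
    unfolding h_def using assms(1,4) by (rule exp_kernel_sum_fourier_transform(1))
  ultimately have "AE y in lborel. g y = h y"
    using assms(5) fourier_transform_unique by blast
  then show ?thesis
    using assms(6,4) unfolding h_def by (intro continuous_AE_eq_exp_kernel_sum)
qed

section \<open>The Zak transform of a sum of kernels\<close>

lemma has_sum_sum:
  fixes f :: "'i \<Rightarrow> 'a \<Rightarrow> 'b::topological_comm_monoid_add"
  assumes "finite I" "\<And>i. i \<in> I \<Longrightarrow> (f i has_sum s i) A"
  shows "((\<lambda>x. \<Sum>i\<in>I. f i x) has_sum (\<Sum>i\<in>I. s i)) A"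
  using assms by (induction I rule: finite_induct) (auto intro: has_sum_add)

lemma has_sum_geometric:
  fixes z :: "'a::{real_normed_field, banach}"
  assumes "norm z < 1"
  shows "((\<lambda>n. z ^ n) has_sum (1 / (1 - z))) UNIV"
  using assms by (intro norm_summable_imp_has_sum geometric_sums)
    (auto simp: norm_power intro!: summable_geometric)

lemma has_sum_exp_int_nonpos:
  fixes u :: complex
  assumes "0 < Re u"
  shows "((\<lambda>k::int. if k \<le> 0 then exp (of_int k * u) else 0) has_sum 1 / (1 - exp (- u))) UNIV"
proof -
  have "((\<lambda>n. exp (- u) ^ n) has_sum 1 / (1 - exp (- u))) UNIV"
    using assms by (intro has_sum_geometric) simp
  also have "?this \<longleftrightarrow> ((\<lambda>k::int. exp (of_int k * u)) has_sum 1 / (1 - exp (- u))) {..0}"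
    by (rule has_sum_reindex_bij_witness[of _ "\<lambda>k. nat (- k)" "\<lambda>n. - int n"])
      (auto simp: exp_of_nat_mult[symmetric])
  also have "\<dots> \<longleftrightarrow> ?thesis"
    by (rule has_sum_cong_neutral) auto
  finally show ?thesis .
qed

lemma has_sum_exp_int_pos:
  fixes u :: complex
  assumes "Re u < 0"
  shows "((\<lambda>k::int. if 0 < k then exp (of_int k * u) else 0) has_sum - 1 / (1 - exp (- u))) UNIV"
proof -
  have "norm (exp u) < 1"
    using assms by simp
  then have "((\<lambda>n. exp u ^ n) has_sum exp u / (1 - exp u)) {1..}"
    by (rule has_sum_geometric_from_1)
  also have "exp u / (1 - exp u) = - 1 / (1 - exp (- u))"
  proof -
    have "exp u \<noteq> 1"
      using \<open>norm (exp u) < 1\<close> by (metis norm_one order_less_irrefl)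
    then show ?thesis
      by (simp add: exp_minus divide_simps) (simp add: algebra_simps)
  qed
  also have "((\<lambda>n. exp u ^ n) has_sum - 1 / (1 - exp (- u))) {1..} \<longleftrightarrow>
      ((\<lambda>k::int. exp (of_int k * u)) has_sum - 1 / (1 - exp (- u))) {0<..}"
    by (rule has_sum_reindex_bij_witness[of _ nat int]) (auto simp: exp_of_nat_mult[symmetric])
  also have "\<dots> \<longleftrightarrow> ?thesis"
    by (rule has_sum_cong_neutral) auto
  finally show ?thesis .
qed

lemma exp_kernel_zak_has_sum:
  assumes d: "d \<noteq> 0" and x: "0 \<le> x" "x < \<alpha>"
  shows "((\<lambda>k::int. exp_kernel d (x - \<alpha> * real_of_int k) *
      exp (2 * complex_of_real pi * \<i> * complex_of_real (\<alpha> * real_of_int k * \<xi>))) has_sum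
    complex_of_real (1 / d) * (complex_of_real (exp (- x / d)) /
      (1 - exp (- (complex_of_real \<alpha> * (complex_of_real (1 / d) + 2 * complex_of_real pi * \<i> * complex_of_real \<xi>)))))) UNIV"
proof -
  define u where "u = complex_of_real \<alpha> * (complex_of_real (1 / d) + 2 * complex_of_real pi * \<i> * complex_of_real \<xi>)"
  define c where "c = complex_of_real (exp (- x / d) / \<bar>d\<bar>)"
  have support: "0 \<le> x - \<alpha> * real_of_int k \<longleftrightarrow> k \<le> 0" for k :: int
  proof
    assume "0 \<le> x - \<alpha> * real_of_int k"
    then have "\<alpha> * real_of_int k < \<alpha> * 1" using x by linarith
    then show "k \<le> 0" using x by (simp add: mult_less_cancel_left_pos)
  next
    assume "k \<le> 0"
    then have "\<alpha> * real_of_int k \<le> 0" using x by (simp add: mult_nonneg_nonpos)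
    then show "0 \<le> x - \<alpha> * real_of_int k" using x by linarith
  qed
  have "complex_of_real (- (x - \<alpha> * real_of_int k) / d) +
      2 * complex_of_real pi * \<i> * complex_of_real (\<alpha> * real_of_int k * \<xi>)
      = complex_of_real (- x / d) + of_int k * u" for k :: int
    using d by (simp add: u_def field_simps)
  then have "exp (complex_of_real (- (x - \<alpha> * real_of_int k) / d)) *
      exp (2 * complex_of_real pi * \<i> * complex_of_real (\<alpha> * real_of_int k * \<xi>))
      = exp (complex_of_real (- x / d)) * exp (of_int k * u)" for k :: int
    by (simp only: exp_add[symmetric])
  then have summand: "exp_kernel d (x - \<alpha> * real_of_int k) *
      exp (2 * complex_of_real pi * \<i> * complex_of_real (\<alpha> * real_of_int k * \<xi>))
      = c * (if 0 < d \<longleftrightarrow> k \<le> 0 then exp (of_int k * u) else 0)" for k :: int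
    unfolding exp_kernel_def c_def support
    by (simp add: exp_of_real[symmetric] divide_inverse mult_ac)
  have Re_u: "Re u = \<alpha> / d"
    by (simp add: u_def)
  show ?thesis
  proof (cases "0 < d")
    case True
    then have "((\<lambda>k::int. c * (if k \<le> 0 then exp (of_int k * u) else 0)) has_sum c * (1 / (1 - exp (- u)))) UNIV"
      using x Re_u by (intro has_sum_cmult_right has_sum_exp_int_nonpos) simp
    then show ?thesis
      using True unfolding summand by (simp add: c_def u_def)
  next
    case False
    then have "d < 0" using d by simp
    then have "((\<lambda>k::int. c * (if 0 < k then exp (of_int k * u) else 0)) has_sum c * (- 1 / (1 - exp (- u)))) UNIV"
      using x Re_u by (intro has_sum_cmult_right has_sum_exp_int_pos) (simp add: divide_pos_neg)
    then show ?thesis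
      using \<open>d < 0\<close> unfolding summand by (simp add: c_def u_def not_le)
  qed
qed

lemma exp_kernel_sum_zak_transform:
  assumes "finite I" "\<And>i. i \<in> I \<Longrightarrow> d i \<noteq> 0" "0 \<le> x" "x < \<alpha>"
  shows "zak_transform \<alpha> (\<lambda>y. \<Sum>i\<in>I. c i * exp_kernel (d i) y) x \<xi> =
    (\<Sum>i\<in>I. complex_of_real (1 / d i) * (complex_of_real (exp (- x / d i)) /
      (1 - exp (- (complex_of_real \<alpha> * (complex_of_real (1 / d i) + 2 * complex_of_real pi * \<i> * complex_of_real \<xi>))))) * c i)"
proof -
  have summand: "(\<Sum>i\<in>I. c i * exp_kernel (d i) y) * e = (\<Sum>i\<in>I. exp_kernel (d i) y * e * c i)" for y e
    unfolding sum_distrib_right by (simp add: mult_ac)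
  have "((\<lambda>k::int. \<Sum>i\<in>I. exp_kernel (d i) (x - \<alpha> * real_of_int k) *
      exp (2 * complex_of_real pi * \<i> * complex_of_real (\<alpha> * real_of_int k * \<xi>)) * c i) has_sum
    (\<Sum>i\<in>I. complex_of_real (1 / d i) * (complex_of_real (exp (- x / d i)) /
      (1 - exp (- (complex_of_real \<alpha> * (complex_of_real (1 / d i) + 2 * complex_of_real pi * \<i> * complex_of_real \<xi>))))) * c i)) UNIV"
    using assms by (intro has_sum_sum has_sum_cmult_left exp_kernel_zak_has_sum) auto
  then show ?thesis
    unfolding zak_transform_def summand by (rule infsumI)
qed

theorem corollary1:
  fixes m :: nat and \<delta> :: "nat \<Rightarrow> real" and g :: "real \<Rightarrow> complex" and \<alpha> :: real
  assumes m: "m \<ge> 2"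
    and \<delta>_nz: "\<And>k. k \<in> {1..m} \<Longrightarrow> \<delta> k \<noteq> 0"
    and \<delta>_inj: "inj_on \<delta> {1..m}"
    and g_int: "integrable lborel g"
    and g_cont: "continuous_on UNIV g"
    and g_hat: "\<And>\<xi>. fourier_transform g \<xi> =
        (\<Prod>k\<in>{1..m}. inverse (1 + 2 * complex_of_real pi * \<i> * complex_of_real (\<delta> k * \<xi>)))"
    and \<alpha>: "\<alpha> > 0"
  shows "\<forall>x \<in> {0..<\<alpha>}. \<forall>\<xi> \<in> {0..<1/\<alpha>}.
     zak_transform \<alpha> g x \<xi> =
       (\<Sum>i\<in>{1..m}. complex_of_real (1 / \<delta> i) *
          (complex_of_real (exp (- x / \<delta> i)) /
             (1 - exp (- (complex_of_real \<alpha> * (complex_of_real (1 / \<delta> i) + 2 * complex_of_real pi * \<i> * complex_of_real \<xi>))))) *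
          (\<Prod>k\<in>{1..m} - {i}. inverse (1 - complex_of_real (\<delta> k / \<delta> i))))"
proof (intro ballI)
  fix x \<xi> assume x: "x \<in> {0..<\<alpha>}"
  have "{1..m} \<noteq> {}"
    using m by simp
  then have g: "g = (\<lambda>y. \<Sum>i\<in>{1..m}. (\<Prod>k\<in>{1..m} - {i}. inverse (1 - complex_of_real (\<delta> k / \<delta> i))) *
      exp_kernel (\<delta> i) y)"
    using \<delta>_inj \<delta>_nz g_int g_cont g_hat by (intro ext fourier_product_inversion) auto
  show "zak_transform \<alpha> g x \<xi> =
       (\<Sum>i\<in>{1..m}. complex_of_real (1 / \<delta> i) *
          (complex_of_real (exp (- x / \<delta> i)) /
             (1 - exp (- (complex_of_real \<alpha> * (complex_of_real (1 / \<delta> i) + 2 * complex_of_real pi * \<i> * complex_of_real \<xi>))))) *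
          (\<Prod>k\<in>{1..m} - {i}. inverse (1 - complex_of_real (\<delta> k / \<delta> i))))"
    unfolding g using x \<delta>_nz by (intro exp_kernel_sum_zak_transform) auto
qed

end
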